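(* Let $(\mu,s)$ be a configuration under no observability for the objective game $G$ such that for every $i\in N$, every type $\theta_i\in\operatorname{supp}\mu_i$ is of the form $\theta_i=\alpha\pi_i+\beta$ for some real $\alpha>0$, $\beta$ (possibly depending on $\theta_i$). Suppose that for every nonempty $J\subseteq N$, every mutant sub-profile $\tilde\theta_J\in\prod_{j\in J}(\Theta\setminus\operatorname{supp}\mu_j)$ and every $\eta>0$, the nearby set $B_0^\eta(\tilde\mu^\varepsilon;s)$ is nonempty for all $\varepsilon\in(0,1)^{|J|}$ with $\|\varepsilon\|$ sufficiently small. Then $(\mu,s)$ is stable.
   Context: Objective game: $G=(N,A,\pi)$ is a finite $n$-player normal-form game, $N=\{1,\dots,n\}$, finite action sets $A_i$, $A=\prod_iA_i$, fitness functions $\pi_i:A\to\mathbb{R}$ extended multilinearly to $\prod_i\Delta(A_i)$. Preference types: $\Theta=\mathbb{R}^A$ (extended multilinearly). $\mathcal{M}(\Theta^n)$: product distributions $\mu=\mu_1\times\dots\times\mu_n$ on $\Theta^n$ with finitely supported marginals; $\operatorname{supp}\mu=\prod_i\operatorname{supp}\mu_i$, $\mu_{-i}(\theta_{-i})=\prod_{j\neq i}\mu_j(\theta_j)$. Mutants: for nonempty $J\subseteq N$, a mutant sub-profile is $\tilde\theta_J\in\prod_{j\in J}(\Theta\setminus\operatorname{supp}\mu_j)$ with shares $\varepsilon\in(0,1)^{|J|}$, $\|\varepsilon\|=\max_j\varepsilon_j$; post-entry $\tilde\mu^\varepsilon_i=(1-\varepsilon_i)\mu_i+\varepsilon_i\delta_{\tilde\theta_i}$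 for $i\in J$, $\tilde\mu^\varepsilon_i=\mu_i$ otherwise. No observability: a strategy of player $i$ is $s_i:\operatorname{supp}\mu_i\to\Delta(A_i)$, $s(\theta)=(s_1(\theta_1),\dots,s_n(\theta_n))$; $s$ is a Bayesian–Nash equilibrium if for each $i$ and $\theta_i\in\operatorname{supp}\mu_i$, $s_i(\theta_i)\in\arg\max_{\sigma_i\in\Delta(A_i)}\sum_{\theta'_{-i}\in\operatorname{supp}\mu_{-i}}\mu_{-i}(\theta'_{-i})\theta_i(\sigma_i,s_{-i}(\theta'_{-i}))$; $B_0(\mu)$ is the set of these; $(\mu,s)$ with $s\in B_0(\mu)$ is a configuration, with aggregate outcome $x(\mu,s)=\big(\sum_{\theta_i}\mu_i(\theta_i)s_i(\theta_i)\big)_{i}$. Average fitness: $\Pi_{\theta_i}(\mu;s)=\pi_i(s_i(\theta_i),x(\mu,s)_{-i})$. Balanced: all types in each $\operatorname{supp}\mu_i$ have equal average fitness. Nearby set: for $\eta\ge0$, $B_0^\eta(\tilde\mu^\varepsilon;s)=\{\tilde s\in B_0(\tilde\mu^\varepsilon):\max_{i}\|\tilde s_i(\theta_i)-s_i(\theta_i)\|\le\eta\ \forall\theta\in\operatorname{supp}\mu\}$ (Euclidean norm). $(\mu,s)$ is stable if it is balanced and for every nonempty $J\subseteq N$, every $\tilde\theta_J$ and every $\eta>0$ there exist $\bar\eta\in[0,\eta)$ and $\bar\epsilon\in(0,1)$ such that for every $\varepsilon$ with $\|\varepsilon\|\in(0,\bar\epsilon)$, $B_0^{\bar\eta}(\tilde\mu^\varepsilon;s)\neq\emptyset$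 and every $\tilde s\in B_0^{\bar\eta}(\tilde\mu^\varepsilon;s)$ satisfies either (i) some $j\in J$ has $\Pi_{\theta_j}(\tilde\mu^\varepsilon;\tilde s)>\Pi_{\tilde\theta_j}(\tilde\mu^\varepsilon;\tilde s)$ for all $\theta_j\in\operatorname{supp}\mu_j$, or (ii) for every $i$ all types in $\operatorname{supp}\tilde\mu^\varepsilon_i$ have equal average fitness under $(\tilde\mu^\varepsilon,\tilde s)$. *)

theory Defs
  imports Complex_Main "HOL-Library.FuncSet"
begin

text \<open>A (preference) type is a function on pure profiles, i.e. an element of R^A;
to make Theta = R^A we normalise types to vanish outside the pure profiles.\<close>

definition profiles :: "('p \<Rightarrow> 'a set) \<Rightarrow> ('p \<Rightarrow> 'a) set" where
  "profiles A = PiE UNIV A"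

definition Theta :: "('p \<Rightarrow> 'a set) \<Rightarrow> (('p \<Rightarrow> 'a) \<Rightarrow> real) set" where
  "Theta A = {\<theta>. \<forall>a. a \<notin> profiles A \<longrightarrow> \<theta> a = 0}"

definition mixed :: "'a set \<Rightarrow> ('a \<Rightarrow> real) set" where
  "mixed B = {\<sigma>. (\<forall>a. 0 \<le> \<sigma> a) \<and> (\<forall>a. a \<notin> B \<longrightarrow> \<sigma> a = 0) \<and> sum \<sigma> B = 1}"

definition mlext :: "('p::finite \<Rightarrow> 'a set) \<Rightarrow> (('p \<Rightarrow> 'a) \<Rightarrow> real) \<Rightarrow> ('p \<Rightarrow> 'a \<Rightarrow> real) \<Rightarrow> real" where
  "mlext A \<theta> \<sigma> = (\<Sum>a\<in>profiles A. (\<Prod>p\<in>UNIV. \<sigma> p (a p)) * \<theta> a)"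

definition supp :: "('t \<Rightarrow> real) \<Rightarrow> 't set" where
  "supp m = {t. m t \<noteq> 0}"

definition is_dist :: "('p \<Rightarrow> 'a set) \<Rightarrow> ((('p \<Rightarrow> 'a) \<Rightarrow> real) \<Rightarrow> real) \<Rightarrow> bool" where
  "is_dist A m \<longleftrightarrow> (\<forall>t. 0 \<le> m t) \<and> finite (supp m) \<and> sum m (supp m) = 1 \<and> supp m \<subseteq> Theta A"

definition is_prod_dist :: "('p \<Rightarrow> 'a set) \<Rightarrow> ('p \<Rightarrow> (('p \<Rightarrow> 'a) \<Rightarrow> real) \<Rightarrow> real) \<Rightarrow> bool" where
  "is_prod_dist A \<mu> \<longleftrightarrow> (\<forall>i. is_dist A (\<mu> i))"

definition exp_payoff ::
  "('p::finite \<Rightarrow> 'a set) \<Rightarrow> ('p \<Rightarrow> (('p \<Rightarrow> 'a) \<Rightarrow> real) \<Rightarrow> real)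
   \<Rightarrow> ('p \<Rightarrow> (('p \<Rightarrow> 'a) \<Rightarrow> real) \<Rightarrow> 'a \<Rightarrow> real) \<Rightarrow> 'p
   \<Rightarrow> (('p \<Rightarrow> 'a) \<Rightarrow> real) \<Rightarrow> ('a \<Rightarrow> real) \<Rightarrow> real" where
  "exp_payoff A \<mu> s i \<theta> \<sigma> =
     (\<Sum>t\<in>PiE (UNIV - {i}) (\<lambda>j. supp (\<mu> j)).
        (\<Prod>j\<in>UNIV - {i}. \<mu> j (t j)) * mlext A \<theta> (\<lambda>j. if j = i then \<sigma> else s j (t j)))"

definition B0 ::
  "('p::finite \<Rightarrow> 'a set) \<Rightarrow> ('p \<Rightarrow> (('p \<Rightarrow> 'a) \<Rightarrow> real) \<Rightarrow> real)
   \<Rightarrow> ('p \<Rightarrow> (('p \<Rightarrow> 'a) \<Rightarrow> real) \<Rightarrow> 'a \<Rightarrow> real) set" where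
  "B0 A \<mu> = {s. \<forall>i. \<forall>\<theta>\<in>supp (\<mu> i). s i \<theta> \<in> mixed (A i) \<and>
                 (\<forall>\<sigma>\<in>mixed (A i). exp_payoff A \<mu> s i \<theta> \<sigma> \<le> exp_payoff A \<mu> s i \<theta> (s i \<theta>))}"

definition aggregate ::
  "('p \<Rightarrow> (('p \<Rightarrow> 'a) \<Rightarrow> real) \<Rightarrow> real) \<Rightarrow> ('p \<Rightarrow> (('p \<Rightarrow> 'a) \<Rightarrow> real) \<Rightarrow> 'a \<Rightarrow> real)
   \<Rightarrow> 'p \<Rightarrow> 'a \<Rightarrow> real" where
  "aggregate \<mu> s i = (\<lambda>a. \<Sum>\<theta>\<in>supp (\<mu> i). \<mu> i \<theta> * s i \<theta> a)"

definition avg_fit ::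
  "('p::finite \<Rightarrow> 'a set) \<Rightarrow> ('p \<Rightarrow> ('p \<Rightarrow> 'a) \<Rightarrow> real) \<Rightarrow> ('p \<Rightarrow> (('p \<Rightarrow> 'a) \<Rightarrow> real) \<Rightarrow> real)
   \<Rightarrow> ('p \<Rightarrow> (('p \<Rightarrow> 'a) \<Rightarrow> real) \<Rightarrow> 'a \<Rightarrow> real) \<Rightarrow> 'p \<Rightarrow> (('p \<Rightarrow> 'a) \<Rightarrow> real) \<Rightarrow> real" where
  "avg_fit A \<pi> \<mu> s i \<theta> = mlext A (\<pi> i) ((aggregate \<mu> s)(i := s i \<theta>))"

definition balanced ::
  "('p::finite \<Rightarrow> 'a set) \<Rightarrow> ('p \<Rightarrow> ('p \<Rightarrow> 'a) \<Rightarrow> real) \<Rightarrow> ('p \<Rightarrow> (('p \<Rightarrow> 'a) \<Rightarrow> real) \<Rightarrow> real)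
   \<Rightarrow> ('p \<Rightarrow> (('p \<Rightarrow> 'a) \<Rightarrow> real) \<Rightarrow> 'a \<Rightarrow> real) \<Rightarrow> bool" where
  "balanced A \<pi> \<mu> s \<longleftrightarrow>
     (\<forall>i. \<forall>\<theta>\<in>supp (\<mu> i). \<forall>\<theta>'\<in>supp (\<mu> i). avg_fit A \<pi> \<mu> s i \<theta> = avg_fit A \<pi> \<mu> s i \<theta>')"

text \<open>Post-entry distribution; only the values of theta_t and eps on J matter.\<close>
definition post_entry ::
  "('p \<Rightarrow> (('p \<Rightarrow> 'a) \<Rightarrow> real) \<Rightarrow> real) \<Rightarrow> 'p set \<Rightarrow> ('p \<Rightarrow> ('p \<Rightarrow> 'a) \<Rightarrow> real) \<Rightarrow> ('p \<Rightarrow> real)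
   \<Rightarrow> ('p \<Rightarrow> (('p \<Rightarrow> 'a) \<Rightarrow> real) \<Rightarrow> real)" where
  "post_entry \<mu> J \<theta>t \<epsilon> =
     (\<lambda>i. if i \<in> J then (\<lambda>\<theta>. (1 - \<epsilon> i) * \<mu> i \<theta> + \<epsilon> i * (if \<theta> = \<theta>t i then 1 else 0))
          else \<mu> i)"

definition mutant_profile ::
  "('p \<Rightarrow> 'a set) \<Rightarrow> ('p \<Rightarrow> (('p \<Rightarrow> 'a) \<Rightarrow> real) \<Rightarrow> real) \<Rightarrow> 'p set \<Rightarrow> ('p \<Rightarrow> ('p \<Rightarrow> 'a) \<Rightarrow> real) \<Rightarrow> bool" where
  "mutant_profile A \<mu> J \<theta>t \<longleftrightarrow> (\<forall>j\<in>J. \<theta>t j \<in> Theta A - supp (\<mu> j))"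

definition valid_shares :: "'p set \<Rightarrow> ('p \<Rightarrow> real) \<Rightarrow> bool" where
  "valid_shares J \<epsilon> \<longleftrightarrow> (\<forall>j\<in>J. 0 < \<epsilon> j \<and> \<epsilon> j < 1)"

definition shares_norm :: "'p set \<Rightarrow> ('p \<Rightarrow> real) \<Rightarrow> real" where
  "shares_norm J \<epsilon> = Max (\<epsilon> ` J)"

definition mdist :: "'a set \<Rightarrow> ('a \<Rightarrow> real) \<Rightarrow> ('a \<Rightarrow> real) \<Rightarrow> real" where
  "mdist B \<sigma> \<tau> = sqrt (\<Sum>a\<in>B. (\<sigma> a - \<tau> a)\<^sup>2)"

definition nearby ::
  "('p::finite \<Rightarrow> 'a set) \<Rightarrow> ('p \<Rightarrow> (('p \<Rightarrow> 'a) \<Rightarrow> real) \<Rightarrow> real)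
   \<Rightarrow> ('p \<Rightarrow> (('p \<Rightarrow> 'a) \<Rightarrow> real) \<Rightarrow> 'a \<Rightarrow> real) \<Rightarrow> ('p \<Rightarrow> (('p \<Rightarrow> 'a) \<Rightarrow> real) \<Rightarrow> real) \<Rightarrow> real
   \<Rightarrow> ('p \<Rightarrow> (('p \<Rightarrow> 'a) \<Rightarrow> real) \<Rightarrow> 'a \<Rightarrow> real) set" where
  "nearby A \<mu>' s \<mu> \<eta> = {s'\<in>B0 A \<mu>'. \<forall>i. \<forall>\<theta>\<in>supp (\<mu> i). mdist (A i) (s' i \<theta>) (s i \<theta>) \<le> \<eta>}"

definition stable ::
  "('p::finite \<Rightarrow> 'a set) \<Rightarrow> ('p \<Rightarrow> ('p \<Rightarrow> 'a) \<Rightarrow> real) \<Rightarrow> ('p \<Rightarrow> (('p \<Rightarrow> 'a) \<Rightarrow> real) \<Rightarrow> real)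
   \<Rightarrow> ('p \<Rightarrow> (('p \<Rightarrow> 'a) \<Rightarrow> real) \<Rightarrow> 'a \<Rightarrow> real) \<Rightarrow> bool" where
  "stable A \<pi> \<mu> s \<longleftrightarrow> balanced A \<pi> \<mu> s \<and>
    (\<forall>J. J \<noteq> {} \<longrightarrow> (\<forall>\<theta>t. mutant_profile A \<mu> J \<theta>t \<longrightarrow> (\<forall>\<eta>>0.
       \<exists>\<eta>b \<epsilon>b. 0 \<le> \<eta>b \<and> \<eta>b < \<eta> \<and> 0 < \<epsilon>b \<and> \<epsilon>b < 1 \<and>
         (\<forall>\<epsilon>. valid_shares J \<epsilon> \<and> 0 < shares_norm J \<epsilon> \<and> shares_norm J \<epsilon> < \<epsilon>b \<longrightarrow>
            nearby A (post_entry \<mu> J \<theta>t \<epsilon>) s \<mu> \<eta>b \<noteq> {} \<and>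
            (\<forall>s'\<in>nearby A (post_entry \<mu> J \<theta>t \<epsilon>) s \<mu> \<eta>b.
               (\<exists>j\<in>J. \<forall>\<theta>\<in>supp (\<mu> j).
                  avg_fit A \<pi> (post_entry \<mu> J \<theta>t \<epsilon>) s' j \<theta> >
                  avg_fit A \<pi> (post_entry \<mu> J \<theta>t \<epsilon>) s' j (\<theta>t j))
               \<or> balanced A \<pi> (post_entry \<mu> J \<theta>t \<epsilon>) s')))))"

end

theory Submission
  imports Defs
begin

text \<open>Without observability, the expected payoff of a type against the opponents' type
distribution is, by multilinearity, its payoff against the aggregate outcome. A type
\<open>\<alpha> * \<pi> i + \<beta>\<close> with \<open>\<alpha> > 0\<close> ranks strategies against the aggregate exactly as the fitness
\<open>\<pi> i\<close> does, so its equilibrium strategy maximises average fitness among all strategies, in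
particular among those played by the other types of its population. Hence, in every
Bayesian-Nash equilibrium, fitness types attain the highest average fitness of their
population. This makes \<open>(\<mu>, s)\<close> balanced; after entry, any mutant that does not fall strictly
below every resident of its population matches some resident and so also attains that
maximum, and the post-entry configuration is balanced. Nonemptiness of the nearby sets is
assumed, so no continuity argument is needed.\<close>

definition fin_prob :: "('t \<Rightarrow> real) \<Rightarrow> bool" where
  "fin_prob m \<longleftrightarrow> (\<forall>t. 0 \<le> m t) \<and> finite (supp m) \<and> sum m (supp m) = 1"

lemma fin_prob_supp_nonempty: "fin_prob m \<Longrightarrow> supp m \<noteq> {}"
  by (auto simp: fin_prob_def)

lemma is_dist_imp_fin_prob: "is_dist A m \<Longrightarrow> fin_prob m"
  by (simp add: is_dist_def fin_prob_def)

lemma supp_mix_point_mass: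
  assumes "t0 \<notin> supp m" "0 < e" "e < 1"
  shows "supp (\<lambda>\<theta>. (1 - e) * m \<theta> + e * (if \<theta> = t0 then 1 else 0)) = insert t0 (supp m)"
  using assms by (auto simp: supp_def)

lemma fin_prob_mix_point_mass:
  assumes m: "fin_prob m" and t0: "t0 \<notin> supp m" and e: "0 < e" "e < 1"
  shows "fin_prob (\<lambda>\<theta>. (1 - e) * m \<theta> + e * (if \<theta> = t0 then 1 else 0))"
proof -
  have nn: "\<forall>t. 0 \<le> m t" and fs: "finite (supp m)" and s1: "sum m (supp m) = 1"
    using m by (auto simp: fin_prob_def)
  have "(\<Sum>\<theta>\<in>insert t0 (supp m). (1 - e) * m \<theta> + e * (if \<theta> = t0 then 1 else 0))
      = e + (\<Sum>\<theta>\<in>supp m. (1 - e) * m \<theta>)"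
    using fs t0 by (simp add: supp_def) (rule sum.cong; auto)
  also have "\<dots> = 1" using s1 by (simp add: sum_distrib_left[symmetric])
  finally show ?thesis
    unfolding fin_prob_def supp_mix_point_mass[OF t0 e] using fs nn e
    by (auto intro!: add_nonneg_nonneg mult_nonneg_nonneg)
qed

lemma supp_post_entry:
  assumes "mutant_profile A \<mu> J \<theta>t" "valid_shares J \<epsilon>"
  shows "supp (post_entry \<mu> J \<theta>t \<epsilon> i) = (if i \<in> J then insert (\<theta>t i) (supp (\<mu> i)) else supp (\<mu> i))"
  using assms supp_mix_point_mass[of "\<theta>t i" "\<mu> i" "\<epsilon> i"]
  by (auto simp: post_entry_def mutant_profile_def valid_shares_def)

lemma fin_prob_post_entry:
  assumes "\<forall>j. fin_prob (\<mu> j)" "mutant_profile A \<mu> J \<theta>t" "valid_shares J \<epsilon>"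
  shows "fin_prob (post_entry \<mu> J \<theta>t \<epsilon> i)"
  using assms fin_prob_mix_point_mass[of "\<mu> i" "\<theta>t i" "\<epsilon> i"]
  by (auto simp: post_entry_def mutant_profile_def valid_shares_def)

lemma mixture_in_mixed:
  assumes m: "fin_prob m" and f: "\<forall>\<theta>\<in>supp m. f \<theta> \<in> mixed B"
  shows "(\<lambda>a. \<Sum>\<theta>\<in>supp m. m \<theta> * f \<theta> a) \<in> mixed B"
proof -
  have nn: "\<forall>t. 0 \<le> m t" and s1: "sum m (supp m) = 1" using m by (auto simp: fin_prob_def)
  have "(\<Sum>a\<in>B. \<Sum>\<theta>\<in>supp m. m \<theta> * f \<theta> a) = (\<Sum>\<theta>\<in>supp m. m \<theta> * (\<Sum>a\<in>B. f \<theta> a))"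
    by (simp add: sum.swap[of _ B] sum_distrib_left)
  also have "\<dots> = 1"
    using f s1 by (simp add: mixed_def)
  finally show ?thesis using nn f unfolding mixed_def
    by (auto intro!: sum_nonneg mult_nonneg_nonneg)
qed

lemma aggregate_in_mixed:
  assumes "\<forall>j. fin_prob (\<mu> j)" "s \<in> B0 A \<mu>"
  shows "aggregate \<mu> s i \<in> mixed (A i)"
  unfolding aggregate_def by (rule mixture_in_mixed) (use assms in \<open>auto simp: B0_def\<close>)

lemma exp_payoff_eq_mlext_aggregate:
  fixes A :: "'p::finite \<Rightarrow> 'a set"
  assumes fin: "\<forall>j. finite (supp (\<mu> j))"
  shows "exp_payoff A \<mu> s i \<theta> \<sigma> = mlext A \<theta> ((aggregate \<mu> s)(i := \<sigma>))"
proof -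
  define U where "U = (UNIV::'p set) - {i}"
  define T where "T = PiE U (\<lambda>j. supp (\<mu> j))"
  have others: "(\<Sum>t\<in>T. \<Prod>j\<in>U. \<mu> j (t j) * s j (t j) (a j)) = (\<Prod>j\<in>U. aggregate \<mu> s j (a j))" for a
    unfolding T_def aggregate_def by (rule prod_sum_PiE[symmetric]) (use fin in auto)
  have "exp_payoff A \<mu> s i \<theta> \<sigma>
      = (\<Sum>t\<in>T. \<Sum>a\<in>profiles A. (\<sigma> (a i) * \<theta> a) * (\<Prod>j\<in>U. \<mu> j (t j) * s j (t j) (a j)))"
    unfolding exp_payoff_def mlext_def T_def U_def sum_distrib_left
    by (intro sum.cong refl)
       (simp add: prod.remove[of UNIV i] prod.distrib mult_ac cong: prod.cong_simp)
  also have "\<dots> = (\<Sum>a\<in>profiles A. (\<sigma> (a i) * \<theta> a) * (\<Prod>j\<in>U. aggregate \<mu> s j (a j)))"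
    by (subst sum.swap) (simp add: sum_distrib_left[symmetric] others)
  also have "\<dots> = mlext A \<theta> ((aggregate \<mu> s)(i := \<sigma>))"
    unfolding mlext_def U_def
    by (intro sum.cong refl) (simp add: prod.remove[of UNIV i] mult_ac cong: prod.cong_simp)
  finally show ?thesis .
qed

lemma mlext_affine:
  fixes A :: "'p::finite \<Rightarrow> 'a set"
  assumes fin: "\<forall>p. finite (A p)" and mix: "\<forall>p. \<sigma> p \<in> mixed (A p)"
    and aff: "\<forall>a\<in>profiles A. \<theta> a = \<alpha> * \<pi> a + \<beta>"
  shows "mlext A \<theta> \<sigma> = \<alpha> * mlext A \<pi> \<sigma> + \<beta>"
proof -
  have total: "(\<Sum>a\<in>profiles A. \<Prod>p\<in>UNIV. \<sigma> p (a p)) = 1"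
  proof -
    have "(\<Sum>a\<in>profiles A. \<Prod>p\<in>UNIV. \<sigma> p (a p)) = (\<Prod>p\<in>UNIV. \<Sum>x\<in>A p. \<sigma> p x)"
      unfolding profiles_def by (rule prod_sum_PiE[symmetric]) (use fin in auto)
    also have "\<dots> = 1" using mix by (simp add: mixed_def)
    finally show ?thesis .
  qed
  have "mlext A \<theta> \<sigma>
      = (\<Sum>a\<in>profiles A. \<alpha> * ((\<Prod>p\<in>UNIV. \<sigma> p (a p)) * \<pi> a) + \<beta> * (\<Prod>p\<in>UNIV. \<sigma> p (a p)))"
    unfolding mlext_def by (rule sum.cong[OF refl]) (simp add: aff algebra_simps)
  also have "\<dots> = \<alpha> * mlext A \<pi> \<sigma> + \<beta>"
    by (simp add: sum.distrib sum_distrib_left[symmetric] total mlext_def)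
  finally show ?thesis .
qed

lemma avg_fit_le_fitness_type:
  fixes A :: "'p::finite \<Rightarrow> 'a set"
  assumes fin: "\<forall>p. finite (A p)" and \<mu>: "\<forall>j. fin_prob (\<mu> j)" and s: "s \<in> B0 A \<mu>"
    and \<theta>: "\<theta> \<in> supp (\<mu> i)" "\<theta>' \<in> supp (\<mu> i)"
    and \<alpha>: "\<alpha> > 0" and aff: "\<forall>a\<in>profiles A. \<theta> a = \<alpha> * \<pi> i a + \<beta>"
  shows "avg_fit A \<pi> \<mu> s i \<theta>' \<le> avg_fit A \<pi> \<mu> s i \<theta>"
proof -
  have fin_supp: "\<forall>j. finite (supp (\<mu> j))" using \<mu> by (simp add: fin_prob_def)
  have payoff: "exp_payoff A \<mu> s i \<theta> \<sigma> = \<alpha> * mlext A (\<pi> i) ((aggregate \<mu> s)(i := \<sigma>)) + \<beta>"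
    if "\<sigma> \<in> mixed (A i)" for \<sigma>
    unfolding exp_payoff_eq_mlext_aggregate[OF fin_supp]
    by (rule mlext_affine[OF fin _ aff]) (use that aggregate_in_mixed[OF \<mu> s] in auto)
  have "s i \<theta> \<in> mixed (A i)" "s i \<theta>' \<in> mixed (A i)"
    and "exp_payoff A \<mu> s i \<theta> (s i \<theta>') \<le> exp_payoff A \<mu> s i \<theta> (s i \<theta>)"
    using s \<theta> by (auto simp: B0_def)
  then have "\<alpha> * mlext A (\<pi> i) ((aggregate \<mu> s)(i := s i \<theta>'))
      \<le> \<alpha> * mlext A (\<pi> i) ((aggregate \<mu> s)(i := s i \<theta>))"
    by (simp add: payoff)
  then show ?thesis using \<alpha> unfolding avg_fit_def by (rule mult_left_le_imp_le)
qed

lemma balanced_if_fitness_types: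
  fixes A :: "'p::finite \<Rightarrow> 'a set"
  assumes fin: "\<forall>p. finite (A p)" and \<mu>: "\<forall>j. fin_prob (\<mu> j)" and s: "s \<in> B0 A \<mu>"
    and types: "\<forall>i. \<forall>\<theta>\<in>supp (\<mu> i). \<exists>\<alpha> \<beta>. \<alpha> > 0 \<and> (\<forall>a\<in>profiles A. \<theta> a = \<alpha> * \<pi> i a + \<beta>)"
  shows "balanced A \<pi> \<mu> s"
  unfolding balanced_def
proof (intro allI ballI)
  fix i \<theta>1 \<theta>2 assume \<theta>: "\<theta>1 \<in> supp (\<mu> i)" "\<theta>2 \<in> supp (\<mu> i)"
  have "avg_fit A \<pi> \<mu> s i \<theta> \<le> avg_fit A \<pi> \<mu> s i \<rho>"
    if "\<rho> \<in> supp (\<mu> i)" "\<theta> \<in> supp (\<mu> i)" for \<rho> \<theta>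
    using types that avg_fit_le_fitness_type[OF fin \<mu> s that] by blast
  with \<theta> show "avg_fit A \<pi> \<mu> s i \<theta>1 = avg_fit A \<pi> \<mu> s i \<theta>2"
    by (meson order_antisym)
qed

lemma balanced_or_mutant_outperformed:
  fixes A :: "'p::finite \<Rightarrow> 'a set"
  assumes fin: "\<forall>p. finite (A p)" and \<mu>: "\<forall>j. fin_prob (\<mu> j)"
    and \<mu>': "\<forall>j. fin_prob (\<mu>' j)" and s': "s' \<in> B0 A \<mu>'"
    and supp': "\<And>i. supp (\<mu>' i) = (if i \<in> J then insert (\<theta>t i) (supp (\<mu> i)) else supp (\<mu> i))"
    and types: "\<forall>i. \<forall>\<theta>\<in>supp (\<mu> i). \<exists>\<alpha> \<beta>. \<alpha> > 0 \<and> (\<forall>a\<in>profiles A. \<theta> a = \<alpha> * \<pi> i a + \<beta>)"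
  shows "(\<exists>j\<in>J. \<forall>\<theta>\<in>supp (\<mu> j). avg_fit A \<pi> \<mu>' s' j \<theta> > avg_fit A \<pi> \<mu>' s' j (\<theta>t j))
    \<or> balanced A \<pi> \<mu>' s'"
proof (rule disjCI)
  let ?F = "avg_fit A \<pi> \<mu>' s'"
  assume "\<not> balanced A \<pi> \<mu>' s'"
  then obtain i \<theta>1 \<theta>2 where \<theta>12: "\<theta>1 \<in> supp (\<mu>' i)" "\<theta>2 \<in> supp (\<mu>' i)" "?F i \<theta>1 \<noteq> ?F i \<theta>2"
    unfolding balanced_def by blast
  obtain \<rho> where \<rho>: "\<rho> \<in> supp (\<mu> i)" using fin_prob_supp_nonempty \<mu> by blast
  have resident_max: "?F i \<theta> \<le> ?F i \<rho>'" if \<rho>': "\<rho>' \<in> supp (\<mu> i)" and \<theta>: "\<theta> \<in> supp (\<mu>' i)" for \<rho>' \<theta>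
  proof -
    obtain \<alpha> \<beta> where "\<alpha> > 0" "\<forall>a\<in>profiles A. \<rho>' a = \<alpha> * \<pi> i a + \<beta>"
      using types \<rho>' by blast
    moreover have "\<rho>' \<in> supp (\<mu>' i)" using \<rho>' supp'[of i] by auto
    ultimately show ?thesis using avg_fit_le_fitness_type[OF fin \<mu>' s' _ \<theta>] by blast
  qed
  have residents_equal: "?F i \<rho>1 = ?F i \<rho>2" if "\<rho>1 \<in> supp (\<mu> i)" "\<rho>2 \<in> supp (\<mu> i)" for \<rho>1 \<rho>2
  proof -
    have "supp (\<mu> i) \<subseteq> supp (\<mu>' i)" using supp'[of i] by auto
    with that show ?thesis by (meson order_antisym resident_max subsetD)
  qed
  \<comment> \<open>The only type in \<open>supp (\<mu>' i)\<close> that may fall below \<open>\<rho>\<close> is the mutant.\<close>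
  have "i \<in> J" and mutant_below: "?F i (\<theta>t i) < ?F i \<rho>"
  proof -
    have "?F i \<theta>1 < ?F i \<rho> \<or> ?F i \<theta>2 < ?F i \<rho>"
      using \<theta>12 resident_max[OF \<rho> \<theta>12(1)] resident_max[OF \<rho> \<theta>12(2)] by linarith
    then obtain \<theta> where \<theta>: "\<theta> \<in> supp (\<mu>' i)" and below: "?F i \<theta> < ?F i \<rho>"
      using \<theta>12 by blast
    have "\<theta> \<notin> supp (\<mu> i)" using below residents_equal[OF _ \<rho>] by force
    then have "i \<in> J \<and> \<theta> = \<theta>t i" using \<theta> supp'[of i] by (simp split: if_splits)
    with below show "i \<in> J" "?F i (\<theta>t i) < ?F i \<rho>" by simp_all
  qed
  then show "\<exists>j\<in>J. \<forall>\<theta>\<in>supp (\<mu> j). ?F j \<theta> > ?F j (\<theta>t j)"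
    by (intro bexI[of _ i] ballI) (simp_all add: residents_equal[OF _ \<rho>])
qed

lemma stable_if_post_entry_equilibria_pass:
  fixes A :: "'p::finite \<Rightarrow> 'a set"
  assumes balanced: "balanced A \<pi> \<mu> s"
    and nonempty_nearby: "\<forall>J. J \<noteq> {} \<longrightarrow> (\<forall>\<theta>t. mutant_profile A \<mu> J \<theta>t \<longrightarrow> (\<forall>\<eta>>0.
         \<exists>\<epsilon>b>0. \<forall>\<epsilon>. valid_shares J \<epsilon> \<and> shares_norm J \<epsilon> < \<epsilon>b \<longrightarrow>
            nearby A (post_entry \<mu> J \<theta>t \<epsilon>) s \<mu> \<eta> \<noteq> {}))"
    and pass: "\<And>J \<theta>t \<epsilon> s'. mutant_profile A \<mu> J \<theta>t \<Longrightarrow> valid_shares J \<epsilon> \<Longrightarrow>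
         s' \<in> B0 A (post_entry \<mu> J \<theta>t \<epsilon>) \<Longrightarrow>
         (\<exists>j\<in>J. \<forall>\<theta>\<in>supp (\<mu> j). avg_fit A \<pi> (post_entry \<mu> J \<theta>t \<epsilon>) s' j \<theta>
            > avg_fit A \<pi> (post_entry \<mu> J \<theta>t \<epsilon>) s' j (\<theta>t j))
         \<or> balanced A \<pi> (post_entry \<mu> J \<theta>t \<epsilon>) s'"
  shows "stable A \<pi> \<mu> s"
  unfolding stable_def
proof (intro conjI allI impI balanced)
  fix J \<theta>t and \<eta> :: real
  assume "J \<noteq> {}" and mut: "mutant_profile A \<mu> J \<theta>t" and "\<eta> > 0"
  then obtain \<epsilon>b where "\<epsilon>b > 0" and nonempty: "\<forall>\<epsilon>. valid_shares J \<epsilon> \<and> shares_norm J \<epsilon> < \<epsilon>b \<longrightarrow>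
      nearby A (post_entry \<mu> J \<theta>t \<epsilon>) s \<mu> (\<eta> / 2) \<noteq> {}"
    using nonempty_nearby by (meson half_gt_zero)
  then show "\<exists>\<eta>b \<epsilon>b'. 0 \<le> \<eta>b \<and> \<eta>b < \<eta> \<and> 0 < \<epsilon>b' \<and> \<epsilon>b' < 1 \<and> (\<forall>\<epsilon>. valid_shares J \<epsilon> \<and>
      0 < shares_norm J \<epsilon> \<and> shares_norm J \<epsilon> < \<epsilon>b' \<longrightarrow>
        nearby A (post_entry \<mu> J \<theta>t \<epsilon>) s \<mu> \<eta>b \<noteq> {} \<and>
        (\<forall>s'\<in>nearby A (post_entry \<mu> J \<theta>t \<epsilon>) s \<mu> \<eta>b.
          (\<exists>j\<in>J. \<forall>\<theta>\<in>supp (\<mu> j). avg_fit A \<pi> (post_entry \<mu> J \<theta>t \<epsilon>) s' j \<theta>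
              > avg_fit A \<pi> (post_entry \<mu> J \<theta>t \<epsilon>) s' j (\<theta>t j))
          \<or> balanced A \<pi> (post_entry \<mu> J \<theta>t \<epsilon>) s'))"
    using \<open>\<eta> > 0\<close> pass[OF mut]
    by (intro exI[of _ "\<eta> / 2"] exI[of _ "min \<epsilon>b (1/2)"]) (auto simp: nearby_def)
qed

theorem mainTheorem11:
  fixes A :: "'p::finite \<Rightarrow> 'a set"
    and \<pi> :: "'p \<Rightarrow> ('p \<Rightarrow> 'a) \<Rightarrow> real"
    and \<mu> :: "'p \<Rightarrow> (('p \<Rightarrow> 'a) \<Rightarrow> real) \<Rightarrow> real"
    and s :: "'p \<Rightarrow> (('p \<Rightarrow> 'a) \<Rightarrow> real) \<Rightarrow> 'a \<Rightarrow> real"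
  assumes game: "\<forall>i. finite (A i) \<and> A i \<noteq> {}"
    and dist: "is_prod_dist A \<mu>"
    and equil: "s \<in> B0 A \<mu>"
    and fitness_types: "\<forall>i. \<forall>\<theta>\<in>supp (\<mu> i). \<exists>\<alpha> \<beta>. \<alpha> > 0 \<and> (\<forall>a\<in>profiles A. \<theta> a = \<alpha> * \<pi> i a + \<beta>)"
    and nonempty_nearby: "\<forall>J. J \<noteq> {} \<longrightarrow> (\<forall>\<theta>t. mutant_profile A \<mu> J \<theta>t \<longrightarrow> (\<forall>\<eta>>0.
         \<exists>\<epsilon>b>0. \<forall>\<epsilon>. valid_shares J \<epsilon> \<and> shares_norm J \<epsilon> < \<epsilon>b \<longrightarrow>
            nearby A (post_entry \<mu> J \<theta>t \<epsilon>) s \<mu> \<eta> \<noteq> {}))"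
  shows "stable A \<pi> \<mu> s"
proof (rule stable_if_post_entry_equilibria_pass[OF _ nonempty_nearby])
  have fin: "\<forall>p. finite (A p)" using game by blast
  have \<mu>: "\<forall>j. fin_prob (\<mu> j)" using dist by (metis is_prod_dist_def is_dist_imp_fin_prob)
  show "balanced A \<pi> \<mu> s" by (rule balanced_if_fitness_types[OF fin \<mu> equil fitness_types])
  fix J \<theta>t \<epsilon> s'
  assume mut: "mutant_profile A \<mu> J \<theta>t" and \<epsilon>: "valid_shares J \<epsilon>"
    and s': "s' \<in> B0 A (post_entry \<mu> J \<theta>t \<epsilon>)"
  show "(\<exists>j\<in>J. \<forall>\<theta>\<in>supp (\<mu> j). avg_fit A \<pi> (post_entry \<mu> J \<theta>t \<epsilon>) s' j \<theta>
            > avg_fit A \<pi> (post_entry \<mu> J \<theta>t \<epsilon>) s' j (\<theta>t j))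
        \<or> balanced A \<pi> (post_entry \<mu> J \<theta>t \<epsilon>) s'"
    by (rule balanced_or_mutant_outperformed[OF fin \<mu> _ s' supp_post_entry[OF mut \<epsilon>] fitness_types])
       (use fin_prob_post_entry[OF \<mu> mut \<epsilon>] in blast)
qed

end
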